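(* For every $k\ge2$, $\mathcal A_k\subseteq\mathcal A_{k+1}$ and $\mathcal A_k\subseteq\mathcal A$; that is, $(\mathcal A_k)_k$ is a nested sequence of subsets of $\mathcal A$.
   Context: $d\ge2$; $\mathcal S_{d-1}=\{(w_1,\dots,w_{d-1})\in[0,1]^{d-1}:\sum w_i\le1\}$, $w_d=1-\sum_{i<d}w_i$. $\mathcal A$ is the family of convex functions $A:\mathcal S_{d-1}\to[1/d,1]$ with $\max(w_1,\dots,w_d)\le A({\boldsymbol w})\le1$ for all ${\boldsymbol w}$. $\Gamma_k$ is the set of ${\boldsymbol\alpha}\in\{0,\dots,k\}^{d-1}$ with $\sum\alpha_i\le k$, $\alpha_d=k-\sum_{i<d}\alpha_i$, and $b_{\boldsymbol\alpha}({\boldsymbol w};k)=\frac{k!}{\alpha_1!\cdots\alpha_d!}\prod_{i=1}^dw_i^{\alpha_i}$. Let ${\boldsymbol v}_0={\bf 0}$, ${\boldsymbol v}_r={\boldsymbol e}_r\in\mathbb R^{d-1}$. For coefficients $(\beta_{\boldsymbol\alpha})_{{\boldsymbol\alpha}\in\Gamma_k}$ define $\Delta_{s,r}\beta_{\boldsymbol\alpha}=\beta_{{\boldsymbol\alpha}+{\boldsymbol v}_s}-\beta_{{\boldsymbol\alpha}+{\boldsymbol v}_r}$ and $\Delta_{t,r}\Delta_{s,r}\beta_{\boldsymbol\alpha}=\Delta_{s,r}\beta_{{\boldsymbol\alpha}+{\boldsymbol v}_t}-\Delta_{s,r}\beta_{{\boldsymbol\alpha}+{\boldsymbol v}_r}$.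 $\mathcal A_k$ is the set of functions ${\boldsymbol w}\mapsto\sum_{{\boldsymbol\alpha}\in\Gamma_k}\beta_{\boldsymbol\alpha}b_{\boldsymbol\alpha}({\boldsymbol w};k)$ with all $\beta_{\boldsymbol\alpha}\in[0,1]$ satisfying: (R1) for all ${\boldsymbol\alpha}\in\Gamma_{k-2}$ and $i\in\{1,\dots,d-1\}$: $\Delta^2_{i,0}\beta_{\boldsymbol\alpha}-\sum_{j\in\{1,\dots,d-1\},j\ne i}|\Delta_{i,0}\Delta_{j,0}\beta_{\boldsymbol\alpha}|\ge0$; (R2) $\beta_{\boldsymbol\alpha}=1$ for ${\boldsymbol\alpha}={\bf 0}$ and for ${\boldsymbol\alpha}=k{\boldsymbol e}_i$, $i=1,\dots,d-1$; (R3) $\beta_{\boldsymbol\alpha}\ge1-1/k$ for ${\boldsymbol\alpha}={\boldsymbol e}_i$, ${\boldsymbol\alpha}=(k-1){\boldsymbol e}_i$, and ${\boldsymbol\alpha}=(k-1){\boldsymbol e}_i+{\boldsymbol e}_j$, for all $i\ne j$ in $\{1,\dots,d-1\}$. *)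

theory Defs
  imports "HOL-Analysis.Analysis"
begin

text \<open>Dimension convention: the free coordinates w_1,...,w_{d-1} are indexed by a finite
type 'n, so d - 1 = CARD('n) and d = CARD('n) + 1 \<ge> 2 automatically.
Vectors w live in real^'n; w_d = 1 - sum of the coordinates.\<close>

definition unit_simplex :: "(real^'n) set" where
  "unit_simplex = {w. (\<forall>i. 0 \<le> w$i) \<and> (\<Sum>i\<in>UNIV. w$i) \<le> 1}"

definition wlast :: "real^'n \<Rightarrow> real" where
  "wlast w = 1 - (\<Sum>i\<in>UNIV. w$i)"

definition maxcoord :: "real^'n \<Rightarrow> real" where
  "maxcoord w = max (Max (range (\<lambda>i. w$i))) (wlast w)"

definition pickA :: "(real^'n \<Rightarrow> real) set" where
  "pickA = {A. convex_on unit_simplex A \<and>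
     (\<forall>w\<in>unit_simplex. 1 / real (CARD('n) + 1) \<le> A w \<and> maxcoord w \<le> A w \<and> A w \<le> 1)}"

text \<open>Multi-indices alpha in Gamma_k (first d-1 components; alpha_d = k - sum).\<close>
definition Gamma :: "nat \<Rightarrow> ('n::finite \<Rightarrow> nat) set" where
  "Gamma k = {\<alpha>. (\<Sum>i\<in>UNIV. \<alpha> i) \<le> k}"

definition ev :: "'n \<Rightarrow> 'n \<Rightarrow> nat" where
  "ev i = (\<lambda>j. if j = i then 1 else 0)"

definition bern :: "nat \<Rightarrow> ('n::finite \<Rightarrow> nat) \<Rightarrow> real^'n \<Rightarrow> real" where
  "bern k \<alpha> w =
     fact k / ((\<Prod>i\<in>UNIV. fact (\<alpha> i)) * fact (k - (\<Sum>i\<in>UNIV. \<alpha> i)))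
     * (\<Prod>i\<in>UNIV. (w$i) ^ (\<alpha> i)) * (wlast w) ^ (k - (\<Sum>i\<in>UNIV. \<alpha> i))"

definition D1 :: "(('n \<Rightarrow> nat) \<Rightarrow> real) \<Rightarrow> 'n \<Rightarrow> ('n \<Rightarrow> nat) \<Rightarrow> real" where
  "D1 \<beta> i \<alpha> = \<beta> (\<lambda>j. \<alpha> j + ev i j) - \<beta> \<alpha>"

definition D2 :: "(('n \<Rightarrow> nat) \<Rightarrow> real) \<Rightarrow> 'n \<Rightarrow> 'n \<Rightarrow> ('n \<Rightarrow> nat) \<Rightarrow> real" where
  "D2 \<beta> t s \<alpha> = D1 \<beta> s (\<lambda>j. \<alpha> j + ev t j) - D1 \<beta> s \<alpha>"

definition admissible :: "nat \<Rightarrow> (('n::finite \<Rightarrow> nat) \<Rightarrow> real) \<Rightarrow> bool" where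
  "admissible k \<beta> \<longleftrightarrow>
     (\<forall>\<alpha>\<in>Gamma k. 0 \<le> \<beta> \<alpha> \<and> \<beta> \<alpha> \<le> 1) \<and>
     \<comment> \<open>R1\<close>
     (\<forall>\<alpha>\<in>Gamma (k - 2). \<forall>i. D2 \<beta> i i \<alpha> - (\<Sum>j\<in>UNIV - {i}. \<bar>D2 \<beta> i j \<alpha>\<bar>) \<ge> 0) \<and>
     \<comment> \<open>R2\<close>
     \<beta> (\<lambda>j. 0) = 1 \<and> (\<forall>i. \<beta> (\<lambda>j. k * ev i j) = 1) \<and>
     \<comment> \<open>R3\<close>
     (\<forall>i. \<beta> (ev i) \<ge> 1 - 1 / real k \<and> \<beta> (\<lambda>j. (k - 1) * ev i j) \<ge> 1 - 1 / real k) \<and>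
     (\<forall>i j. i \<noteq> j \<longrightarrow> \<beta> (\<lambda>l. (k - 1) * ev i l + ev j l) \<ge> 1 - 1 / real k)"

text \<open>The family \<A>_k (functions identified through their values on the simplex).\<close>
definition Ak :: "nat \<Rightarrow> (real^'n::finite \<Rightarrow> real) set" where
  "Ak k = {A. \<exists>\<beta>. admissible k \<beta> \<and>
              (\<forall>w\<in>unit_simplex. A w = (\<Sum>\<alpha>\<in>Gamma k. \<beta> \<alpha> * bern k \<alpha> w))}"

end

theory Submission
  imports Defs
begin

(*
  Write B_k(\<beta>) = \<Sum>_{\<alpha>\<in>\<Gamma>_k} \<beta>_\<alpha> b_\<alpha>(\<cdot>;k) for the Bernstein polynomial with
  coefficients \<beta>.  The proof has two independent halves.

  Nesting: multiplying B_k(\<beta>) by 1 = w_1 + ... + w_d and collecting terms gives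
  the classical degree elevation B_k(\<beta>) = B_{k+1}(E\<beta>), with
  (E\<beta>)_\<alpha> = (\<Sum>_i \<alpha>_i \<beta>_{\<alpha>-e_i} + (k+1-|\<alpha>|) \<beta>_\<alpha>) / (k+1).  The operator E is a
  positive average, commutes with finite differences, and maps the prescribed
  vertex coefficients to the prescribed ones, so it preserves (R1)-(R3).

  Inclusion in \<A>: along a segment x + t u in the simplex, the derivative of
  B_{k+1}(\<beta>) is (k+1) B_k(\<Sum>_i u_i \<Delta>_i \<beta>), so the second derivative is a Bernstein
  polynomial whose coefficients are quadratic forms u^T (\<Delta>_i\<Delta>_j \<beta>_\<alpha>) u.  By (R1)
  these matrices are symmetric and diagonally dominant, hence positive
  semidefinite; so B_k(\<beta>) is convex on the simplex.  The tangent inequalities at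
  the vertices 0 and e_i, evaluated with (R2)-(R3), give the lower bounds
  w_d \<le> A(w) and w_i \<le> A(w); the upper bound A \<le> 1 follows from \<beta> \<le> 1 and the
  partition of unity, and 1/d \<le> max_i w_i holds on the whole hyperplane.
*)

subsection \<open>Multi-indices\<close>

definition incr :: "'n \<Rightarrow> ('n \<Rightarrow> nat) \<Rightarrow> ('n \<Rightarrow> nat)" where
  "incr i \<alpha> = (\<lambda>j. \<alpha> j + ev i j)"

definition decr :: "'n \<Rightarrow> ('n \<Rightarrow> nat) \<Rightarrow> ('n \<Rightarrow> nat)" where
  "decr i \<alpha> = (\<lambda>j. \<alpha> j - ev i j)"

definition mdeg :: "('n::finite \<Rightarrow> nat) \<Rightarrow> nat" where
  "mdeg \<alpha> = (\<Sum>i\<in>UNIV. \<alpha> i)"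

lemma Gamma_iff: "\<alpha> \<in> Gamma k \<longleftrightarrow> mdeg \<alpha> \<le> k"
  by (simp add: Gamma_def mdeg_def)

lemma finite_Gamma: "finite (Gamma k :: ('n::finite \<Rightarrow> nat) set)"
proof -
  have "Gamma k \<subseteq> Pi\<^sub>E UNIV (\<lambda>_::'n. {..k})"
  proof
    fix \<alpha> :: "'n \<Rightarrow> nat" assume "\<alpha> \<in> Gamma k"
    then have "mdeg \<alpha> \<le> k" by (simp add: Gamma_iff)
    moreover have "\<alpha> i \<le> mdeg \<alpha>" for i unfolding mdeg_def
      by (rule member_le_sum) auto
    ultimately show "\<alpha> \<in> Pi\<^sub>E UNIV (\<lambda>_. {..k})" by (auto intro: le_trans)
  qed
  then show ?thesis by (rule finite_subset) (simp add: finite_PiE)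
qed

lemma mdeg_incr [simp]: "mdeg (incr i \<alpha>) = Suc (mdeg \<alpha>)"
  by (simp add: mdeg_def incr_def ev_def sum.distrib)

lemma decr_incr [simp]: "decr i (incr i \<alpha>) = \<alpha>"
  by (simp add: decr_def incr_def)

lemma incr_decr: "\<alpha> i \<noteq> 0 \<Longrightarrow> incr i (decr i \<alpha>) = \<alpha>"
  by (auto simp: decr_def incr_def ev_def fun_eq_iff)

lemma incr_same [simp]: "incr i \<alpha> i = Suc (\<alpha> i)"
  by (simp add: incr_def ev_def)

lemma mdeg_decr: "\<alpha> i \<noteq> 0 \<Longrightarrow> Suc (mdeg (decr i \<alpha>)) = mdeg \<alpha>"
  by (metis incr_decr mdeg_incr)

lemma decr_incr_other: "m \<noteq> i \<Longrightarrow> decr m (incr i \<alpha>) = incr i (decr m \<alpha>)"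
  by (auto simp: decr_def incr_def ev_def fun_eq_iff)

text \<open>Every \<gamma> \<in> \<Gamma>_{k+1} with \<gamma>_i > 0 is \<alpha> + e_i for a unique \<alpha> \<in> \<Gamma>_k; terms with
  weight \<gamma>_i vanish elsewhere.\<close>

lemma sum_Gamma_incr:
  fixes h :: "('n::finite \<Rightarrow> nat) \<Rightarrow> real"
  shows "(\<Sum>\<gamma>\<in>Gamma (Suc k). real (\<gamma> i) * h \<gamma>) = (\<Sum>\<alpha>\<in>Gamma k. real (Suc (\<alpha> i)) * h (incr i \<alpha>))"
proof -
  have "(\<Sum>\<gamma>\<in>Gamma (Suc k). real (\<gamma> i) * h \<gamma>) = (\<Sum>\<gamma>\<in>incr i ` Gamma k. real (\<gamma> i) * h \<gamma>)"
  proof (rule sum.mono_neutral_right)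
    show "finite (Gamma (Suc k))" by (rule finite_Gamma)
    show "incr i ` Gamma k \<subseteq> Gamma (Suc k)" by (auto simp: Gamma_iff)
    show "\<forall>\<gamma>\<in>Gamma (Suc k) - incr i ` Gamma k. real (\<gamma> i) * h \<gamma> = 0"
    proof
      fix \<gamma> assume \<gamma>: "\<gamma> \<in> Gamma (Suc k) - incr i ` Gamma k"
      show "real (\<gamma> i) * h \<gamma> = 0"
      proof (cases "\<gamma> i = 0")
        case False
        then have "\<gamma> = incr i (decr i \<gamma>)" and "decr i \<gamma> \<in> Gamma k"
          using \<gamma> mdeg_decr[of \<gamma> i, OF False] by (auto simp: incr_decr Gamma_iff)
        with \<gamma> show ?thesis by blast
      qed simp
    qed
  qed
  also have "\<dots> = (\<Sum>\<alpha>\<in>Gamma k. real (Suc (\<alpha> i)) * h (incr i \<alpha>))"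
    by (subst sum.reindex) (auto intro: inj_on_inverseI[where g = "decr i"])
  finally show ?thesis .
qed

lemma sum_Gamma_top:
  fixes h :: "('n::finite \<Rightarrow> nat) \<Rightarrow> real"
  shows "(\<Sum>\<gamma>\<in>Gamma (Suc k). real (Suc k - mdeg \<gamma>) * h \<gamma>) = (\<Sum>\<alpha>\<in>Gamma k. real (Suc k - mdeg \<alpha>) * h \<alpha>)"
proof (rule sum.mono_neutral_right)
  show "\<forall>\<gamma>\<in>Gamma (Suc k) - Gamma k. real (Suc k - mdeg \<gamma>) * h \<gamma> = 0"
    by (auto simp: Gamma_iff)
qed (auto simp: finite_Gamma Gamma_iff)

lemma sum_scaled_ev: "(\<Sum>m\<in>UNIV. real (c * ev (i::'n::finite) m) * X m) = real c * (X i :: real)"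
proof -
  have "(\<Sum>m\<in>UNIV. real (c * ev i m) * X m) = (\<Sum>m\<in>UNIV. if m = i then real c * X i else 0)"
    by (rule sum.cong) (simp_all add: ev_def)
  then show ?thesis by (simp add: sum.delta)
qed

lemma sum_ev: "(\<Sum>m\<in>UNIV. real (ev (i::'n::finite) m) * X m) = (X i :: real)"
  using sum_scaled_ev[of 1 i X] by simp

lemma sum_scaled_ev_plus_ev:
  "(\<Sum>m\<in>UNIV. real (c * ev (i::'n::finite) m + ev j m) * X m) = real c * X i + (X j :: real)"
  by (simp only: of_nat_add distrib_right sum.distrib sum_scaled_ev sum_ev)

lemma mdeg_scaled_ev: "mdeg (\<lambda>j. c * ev i j) = c"
proof -
  have "real (mdeg (\<lambda>j. c * ev i j)) = (\<Sum>m\<in>UNIV. real (c * ev i m) * 1)"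
    by (simp add: mdeg_def)
  then show ?thesis by (simp only: sum_scaled_ev)
qed

lemma mdeg_ev: "mdeg (ev i) = 1"
  using mdeg_scaled_ev[of 1 i] by simp

lemma mdeg_scaled_ev_plus_ev: "mdeg (\<lambda>l. c * ev i l + ev j l) = Suc c"
  using mdeg_scaled_ev[of c i] mdeg_ev[of j] by (simp add: mdeg_def sum.distrib)

lemma decr_scaled_ev: "decr i (\<lambda>l. c * ev i l) = (\<lambda>l. (c - 1) * ev i l)"
  by (auto simp: fun_eq_iff decr_def ev_def)

lemma decr_ev: "decr i (ev i) = (\<lambda>l. 0)"
  by (auto simp: fun_eq_iff decr_def ev_def)

lemma decr_scaled_ev_plus_ev:
  "i \<noteq> j \<Longrightarrow> decr i (\<lambda>l. c * ev i l + ev j l) = (\<lambda>l. (c - 1) * ev i l + ev j l)"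
  "i \<noteq> j \<Longrightarrow> decr j (\<lambda>l. c * ev i l + ev j l) = (\<lambda>l. c * ev i l)"
  by (auto simp: fun_eq_iff decr_def ev_def)

subsection \<open>Bernstein polynomials\<close>

definition wpow :: "('n::finite \<Rightarrow> nat) \<Rightarrow> real^'n \<Rightarrow> real" where
  "wpow \<alpha> w = (\<Prod>i\<in>UNIV. (w$i) ^ (\<alpha> i))"

definition mcoef :: "nat \<Rightarrow> ('n::finite \<Rightarrow> nat) \<Rightarrow> real" where
  "mcoef k \<alpha> = fact k / ((\<Prod>i\<in>UNIV. fact (\<alpha> i)) * fact (k - mdeg \<alpha>))"

definition bpoly :: "nat \<Rightarrow> (('n::finite \<Rightarrow> nat) \<Rightarrow> real) \<Rightarrow> real^'n \<Rightarrow> real" where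
  "bpoly k \<beta> w = (\<Sum>\<alpha>\<in>Gamma k. \<beta> \<alpha> * bern k \<alpha> w)"

lemma Ak_iff:
  "A \<in> Ak k \<longleftrightarrow> (\<exists>\<beta>. admissible k \<beta> \<and> (\<forall>w\<in>unit_simplex. A w = bpoly k \<beta> w))"
  by (simp add: Ak_def bpoly_def)

lemma bern_eq: "bern k \<alpha> w = mcoef k \<alpha> * wpow \<alpha> w * wlast w ^ (k - mdeg \<alpha>)"
  by (simp add: bern_def mcoef_def wpow_def mdeg_def)

lemma sum_coords_wlast: "(\<Sum>i\<in>UNIV. w$i) + wlast w = 1"
  by (simp add: wlast_def)

lemma wpow_incr: "wpow (incr i \<alpha>) w = w$i * wpow \<alpha> w"
proof -
  have "wpow (incr i \<alpha>) w = (\<Prod>j\<in>UNIV. (if j = i then w$i else 1) * (w$j)^(\<alpha> j))"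
    unfolding wpow_def by (rule prod.cong) (auto simp: incr_def ev_def)
  then show ?thesis by (simp add: prod.distrib wpow_def)
qed

lemma prod_fact_incr:
  "(\<Prod>j\<in>UNIV. fact (incr i (\<alpha>::'n::finite\<Rightarrow>nat) j) :: real) = real (Suc (\<alpha> i)) * (\<Prod>j\<in>UNIV. fact (\<alpha> j))"
proof -
  have "(\<Prod>j\<in>UNIV. fact (incr i \<alpha> j) :: real)
      = (\<Prod>j\<in>UNIV. (if j = i then real (Suc (\<alpha> i)) else 1) * fact (\<alpha> j))"
    by (rule prod.cong) (auto simp: incr_def ev_def)
  then show ?thesis by (simp add: prod.distrib)
qed

lemma mcoef_incr:
  "mdeg \<alpha> \<le> k \<Longrightarrow> mcoef (Suc k) (incr i \<alpha>) * real (Suc (\<alpha> i)) = real (Suc k) * mcoef k \<alpha>"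
  unfolding mcoef_def
  by (simp add: prod_fact_incr prod_zero_iff fact_Suc[of k] del: of_nat_Suc fact_Suc)

lemma mcoef_same:
  "mdeg \<alpha> \<le> k \<Longrightarrow> mcoef (Suc k) \<alpha> * real (Suc k - mdeg \<alpha>) = real (Suc k) * mcoef k \<alpha>"
  unfolding mcoef_def
  by (simp add: prod_zero_iff Suc_diff_le fact_Suc[of k] fact_Suc[of "k - mdeg \<alpha>"]
      del: of_nat_Suc fact_Suc)

lemma bern_times_coord:
  assumes "mdeg \<alpha> \<le> k"
  shows "real (Suc k) * (w$i * bern k \<alpha> w) = real (Suc (\<alpha> i)) * bern (Suc k) (incr i \<alpha>) w"
proof -
  have "real (Suc (\<alpha> i)) * bern (Suc k) (incr i \<alpha>) w
     = (mcoef (Suc k) (incr i \<alpha>) * real (Suc (\<alpha> i))) * (w$i * wpow \<alpha> w) * wlast w ^ (k - mdeg \<alpha>)"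
    by (simp add: bern_eq wpow_incr)
  also have "\<dots> = real (Suc k) * (w$i * bern k \<alpha> w)"
    by (simp only: mcoef_incr[OF assms]) (simp add: bern_eq)
  finally show ?thesis by simp
qed

lemma bern_times_wlast:
  assumes "mdeg \<alpha> \<le> k"
  shows "real (Suc k) * (wlast w * bern k \<alpha> w) = real (Suc k - mdeg \<alpha>) * bern (Suc k) \<alpha> w"
proof -
  have "real (Suc k - mdeg \<alpha>) * bern (Suc k) \<alpha> w
     = (mcoef (Suc k) \<alpha> * real (Suc k - mdeg \<alpha>)) * wpow \<alpha> w * (wlast w * wlast w ^ (k - mdeg \<alpha>))"
    using assms by (simp add: bern_eq Suc_diff_le)
  also have "\<dots> = real (Suc k) * (wlast w * bern k \<alpha> w)"
    by (simp only: mcoef_same[OF assms]) (simp add: bern_eq)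
  finally show ?thesis by simp
qed

lemma bern_nonneg: "w \<in> unit_simplex \<Longrightarrow> bern k \<alpha> w \<ge> 0"
  unfolding bern_eq mcoef_def wpow_def unit_simplex_def wlast_def
  by (intro mult_nonneg_nonneg divide_nonneg_nonneg prod_nonneg zero_le_power) auto

lemma bpoly_mono:
  "w \<in> unit_simplex \<Longrightarrow> (\<And>\<alpha>. \<alpha> \<in> Gamma k \<Longrightarrow> f \<alpha> \<le> g \<alpha>) \<Longrightarrow> bpoly k f w \<le> bpoly k g w"
  unfolding bpoly_def by (intro sum_mono mult_right_mono bern_nonneg) auto


subsection \<open>Degree elevation\<close>

text \<open>Keeping K free makes it
  commute with differences, which lower K by one.\<close>

definition elev_sum :: "real \<Rightarrow> (('n::finite \<Rightarrow> nat) \<Rightarrow> real) \<Rightarrow> ('n \<Rightarrow> nat) \<Rightarrow> real" where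
  "elev_sum K \<beta> \<alpha> = (\<Sum>i\<in>UNIV. real (\<alpha> i) * \<beta> (decr i \<alpha>)) + (K - real (mdeg \<alpha>)) * \<beta> \<alpha>"

definition elevate :: "nat \<Rightarrow> (('n::finite \<Rightarrow> nat) \<Rightarrow> real) \<Rightarrow> ('n \<Rightarrow> nat) \<Rightarrow> real" where
  "elevate k \<beta> \<alpha> = elev_sum (real (Suc k)) \<beta> \<alpha> / real (Suc k)"

text \<open>One Bernstein term of degree k, multiplied by (k+1)(w_1 + \<dots> + w_d) = k+1,
  written as a combination of terms of degree k+1.\<close>

lemma bern_spread:
  assumes "mdeg \<alpha> \<le> k"
  shows "\<beta> \<alpha> * (real (Suc k) * bern k \<alpha> w)
    = (\<Sum>i\<in>UNIV. real (Suc (\<alpha> i)) * (\<beta> (decr i (incr i \<alpha>)) * bern (Suc k) (incr i \<alpha>) w))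
      + real (Suc k - mdeg \<alpha>) * (\<beta> \<alpha> * bern (Suc k) \<alpha> w)"
proof -
  have coord: "\<beta> \<alpha> * (real (Suc k) * (w$i * bern k \<alpha> w))
      = real (Suc (\<alpha> i)) * (\<beta> (decr i (incr i \<alpha>)) * bern (Suc k) (incr i \<alpha>) w)" for i
    using bern_times_coord[OF assms, of w i] by (simp only: decr_incr mult.left_commute)
  have last: "\<beta> \<alpha> * (real (Suc k) * (wlast w * bern k \<alpha> w))
      = real (Suc k - mdeg \<alpha>) * (\<beta> \<alpha> * bern (Suc k) \<alpha> w)"
    using bern_times_wlast[OF assms, of w] by (simp only: mult.left_commute)
  have "\<beta> \<alpha> * (real (Suc k) * bern k \<alpha> w)
      = \<beta> \<alpha> * (real (Suc k) * (((\<Sum>i\<in>UNIV. w$i) + wlast w) * bern k \<alpha> w))"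
    by (simp add: sum_coords_wlast)
  also have "\<dots> = (\<Sum>i\<in>UNIV. \<beta> \<alpha> * (real (Suc k) * (w$i * bern k \<alpha> w)))
      + \<beta> \<alpha> * (real (Suc k) * (wlast w * bern k \<alpha> w))"
    by (simp add: distrib_left distrib_right sum_distrib_left sum_distrib_right)
  finally show ?thesis by (simp only: coord last)
qed

lemma bpoly_elevate: "bpoly k \<beta> w = bpoly (Suc k) (elevate k \<beta>) w"
proof -
  have "real (Suc k) * bpoly k \<beta> w = (\<Sum>\<alpha>\<in>Gamma k. \<beta> \<alpha> * (real (Suc k) * bern k \<alpha> w))"
    by (simp add: bpoly_def sum_distrib_left mult_ac)
  also have "\<dots> = (\<Sum>\<alpha>\<in>Gamma k.
        (\<Sum>i\<in>UNIV. real (Suc (\<alpha> i)) * (\<beta> (decr i (incr i \<alpha>)) * bern (Suc k) (incr i \<alpha>) w))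
        + real (Suc k - mdeg \<alpha>) * (\<beta> \<alpha> * bern (Suc k) \<alpha> w))"
    by (rule sum.cong[OF refl], rule bern_spread) (simp add: Gamma_iff)
  also have "\<dots> = (\<Sum>i\<in>UNIV. \<Sum>\<alpha>\<in>Gamma k. real (Suc (\<alpha> i)) * (\<beta> (decr i (incr i \<alpha>)) * bern (Suc k) (incr i \<alpha>) w))
        + (\<Sum>\<alpha>\<in>Gamma k. real (Suc k - mdeg \<alpha>) * (\<beta> \<alpha> * bern (Suc k) \<alpha> w))"
    by (simp add: sum.distrib sum.swap[of _ "Gamma k"])
  also have "\<dots> = (\<Sum>i\<in>UNIV. \<Sum>\<gamma>\<in>Gamma (Suc k). real (\<gamma> i) * (\<beta> (decr i \<gamma>) * bern (Suc k) \<gamma> w))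
        + (\<Sum>\<gamma>\<in>Gamma (Suc k). real (Suc k - mdeg \<gamma>) * (\<beta> \<gamma> * bern (Suc k) \<gamma> w))"
    by (simp only: sum_Gamma_incr sum_Gamma_top)
  also have "\<dots> = (\<Sum>\<gamma>\<in>Gamma (Suc k).
        ((\<Sum>i\<in>UNIV. real (\<gamma> i) * \<beta> (decr i \<gamma>)) + real (Suc k - mdeg \<gamma>) * \<beta> \<gamma>) * bern (Suc k) \<gamma> w)"
    by (simp add: sum.distrib sum.swap[of _ "Gamma (Suc k)"] algebra_simps sum_distrib_left sum_distrib_right)
  also have "\<dots> = real (Suc k) * bpoly (Suc k) (elevate k \<beta>) w"
    unfolding bpoly_def elevate_def elev_sum_def sum_distrib_left
    by (rule sum.cong) (auto simp: Gamma_iff of_nat_diff)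
  finally show ?thesis by simp
qed

text \<open>Elevating the constant 1 gives 1, so B_k(1) = 1: the Bernstein basis is a
  partition of unity.\<close>

lemma elev_sum_const: "elev_sum K (\<lambda>_. c) \<alpha> = c * K"
  by (simp add: elev_sum_def mdeg_def algebra_simps sum_distrib_left flip: sum_distrib_right)

lemma bpoly_one: "bpoly k (\<lambda>_. 1) (w::real^'n::finite) = 1"
proof (induction k)
  case 0
  have "Gamma 0 = {(\<lambda>_::'n. 0::nat)}" by (auto simp: Gamma_def fun_eq_iff)
  then show ?case by (simp add: bpoly_def bern_def)
next
  case (Suc k)
  have "elevate k (\<lambda>_::'n\<Rightarrow>nat. 1) = (\<lambda>_. 1)"
    by (simp add: fun_eq_iff elevate_def elev_sum_const del: of_nat_Suc)
  then show ?case using bpoly_elevate[of k "\<lambda>_. 1" w] Suc.IH by simp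
qed


subsection \<open>Elevation preserves admissibility\<close>

lemma D1_incr: "D1 \<beta> i \<alpha> = \<beta> (incr i \<alpha>) - \<beta> \<alpha>"
  by (simp add: D1_def incr_def)

lemma D2_D1: "D2 \<beta> t s = D1 (D1 \<beta> s) t"
  by (simp add: D2_def D1_def fun_eq_iff)

lemma D2_sym: "D2 \<beta> i j \<alpha> = D2 \<beta> j i \<alpha>"
  by (simp add: D2_def D1_def add_ac)

definition diag_dom :: "(('n::finite \<Rightarrow> nat) \<Rightarrow> real) \<Rightarrow> 'n \<Rightarrow> ('n \<Rightarrow> nat) \<Rightarrow> bool" where
  "diag_dom \<beta> i \<alpha> \<longleftrightarrow> D2 \<beta> i i \<alpha> - (\<Sum>j\<in>UNIV - {i}. \<bar>D2 \<beta> i j \<alpha>\<bar>) \<ge> 0"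

lemma admissible_diag_dom: "admissible k \<beta> \<Longrightarrow> \<alpha> \<in> Gamma (k - 2) \<Longrightarrow> diag_dom \<beta> i \<alpha>"
  by (simp add: admissible_def diag_dom_def)

lemma elev_sum_term_incr:
  "real (incr i \<alpha> m) * \<beta> (decr m (incr i \<alpha>))
     = real (\<alpha> m) * \<beta> (incr i (decr m \<alpha>)) + (if m = i then \<beta> \<alpha> else 0)"
proof (cases "m = i")
  case True
  then show ?thesis
    by (cases "\<alpha> i = 0") (simp_all add: incr_decr algebra_simps)
next
  case False
  then have "incr i \<alpha> m = \<alpha> m" by (simp add: incr_def ev_def)
  with False show ?thesis by (simp add: decr_incr_other)
qed

lemma D1_elev_sum: "D1 (elev_sum K \<beta>) i = elev_sum (K - 1) (D1 \<beta> i)"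
proof
  fix \<alpha>
  have "(\<Sum>m\<in>UNIV. real (incr i \<alpha> m) * \<beta> (decr m (incr i \<alpha>)))
      = (\<Sum>m\<in>UNIV. real (\<alpha> m) * \<beta> (incr i (decr m \<alpha>))) + \<beta> \<alpha>"
    by (simp add: elev_sum_term_incr sum.distrib)
  then show "D1 (elev_sum K \<beta>) i \<alpha> = elev_sum (K - 1) (D1 \<beta> i) \<alpha>"
    by (simp add: D1_incr elev_sum_def algebra_simps sum_subtractf)
qed

lemma D2_elev_sum: "D2 (elev_sum K \<beta>) t s = elev_sum (K - 2) (D2 \<beta> t s)"
  by (simp add: D2_D1 D1_elev_sum)

lemma D2_elevate: "D2 (elevate k \<beta>) t s \<alpha> = elev_sum (real (Suc k) - 2) (D2 \<beta> t s) \<alpha> / real (Suc k)"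
proof -
  have "D2 (\<lambda>a. f a / c) t s \<alpha> = D2 f t s \<alpha> / c" for f :: "('a \<Rightarrow> nat) \<Rightarrow> real" and c
    by (simp add: D2_def D1_def diff_divide_distrib)
  then show ?thesis
    unfolding elevate_def by (simp only: D2_elev_sum)
qed

text \<open>For |\<alpha>| \<le> K, \<E>_K\<beta> at \<alpha> is a nonnegative combination of values of \<beta> on
  \<Gamma>_{K-1} (K a natural number): it is monotone, linear and compatible with |\<cdot>|.\<close>

lemma elev_sum_mono:
  assumes le: "\<And>a. a \<in> Gamma n \<Longrightarrow> f a \<le> g a" and \<alpha>: "\<alpha> \<in> Gamma (Suc n)"
  shows "elev_sum (real (Suc n)) f \<alpha> \<le> elev_sum (real (Suc n)) g \<alpha>"
  unfolding elev_sum_def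
proof (rule add_mono)
  show "(\<Sum>i\<in>UNIV. real (\<alpha> i) * f (decr i \<alpha>)) \<le> (\<Sum>i\<in>UNIV. real (\<alpha> i) * g (decr i \<alpha>))"
  proof (rule sum_mono)
    fix i
    show "real (\<alpha> i) * f (decr i \<alpha>) \<le> real (\<alpha> i) * g (decr i \<alpha>)"
    proof (cases "\<alpha> i = 0")
      case False
      then have "decr i \<alpha> \<in> Gamma n"
        using \<alpha> mdeg_decr[of \<alpha> i] by (simp add: Gamma_iff)
      then show ?thesis by (simp add: le mult_left_mono)
    qed simp
  qed
  show "(real (Suc n) - real (mdeg \<alpha>)) * f \<alpha> \<le> (real (Suc n) - real (mdeg \<alpha>)) * g \<alpha>"
  proof (cases "mdeg \<alpha> = Suc n")
    case False
    then have "\<alpha> \<in> Gamma n" "real (mdeg \<alpha>) \<le> real (Suc n)" using \<alpha> by (auto simp: Gamma_iff)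
    then show ?thesis by (simp add: le mult_left_mono)
  qed simp
qed

lemma elev_sum_diff_sum:
  "elev_sum K (\<lambda>a. f a - (\<Sum>j\<in>J. g j a)) \<alpha> = elev_sum K f \<alpha> - (\<Sum>j\<in>J. elev_sum K (g j) \<alpha>)"
  by (simp add: elev_sum_def algebra_simps sum_subtractf sum_distrib_left sum_distrib_right
      sum.distrib sum.swap[of _ J])

lemma elev_sum_abs:
  assumes "real (mdeg \<alpha>) \<le> K"
  shows "\<bar>elev_sum K f \<alpha>\<bar> \<le> elev_sum K (\<lambda>a. \<bar>f a\<bar>) \<alpha>"
proof -
  have "\<bar>elev_sum K f \<alpha>\<bar> \<le> \<bar>\<Sum>i\<in>UNIV. real (\<alpha> i) * f (decr i \<alpha>)\<bar> + \<bar>(K - real (mdeg \<alpha>)) * f \<alpha>\<bar>"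
    unfolding elev_sum_def by (rule abs_triangle_ineq)
  also have "\<dots> \<le> (\<Sum>i\<in>UNIV. \<bar>real (\<alpha> i) * f (decr i \<alpha>)\<bar>) + \<bar>(K - real (mdeg \<alpha>)) * f \<alpha>\<bar>"
    by (simp add: sum_abs)
  also have "\<dots> = elev_sum K (\<lambda>a. \<bar>f a\<bar>) \<alpha>"
    using assms by (simp add: elev_sum_def abs_mult)
  finally show ?thesis .
qed

lemma elevate_bounds:
  assumes "\<And>a. a \<in> Gamma k \<Longrightarrow> 0 \<le> \<beta> a \<and> \<beta> a \<le> 1" and \<alpha>: "\<alpha> \<in> Gamma (Suc k)"
  shows "0 \<le> elevate k \<beta> \<alpha> \<and> elevate k \<beta> \<alpha> \<le> 1"
proof -
  have "elev_sum (real (Suc k)) (\<lambda>_. 0) \<alpha> \<le> elev_sum (real (Suc k)) \<beta> \<alpha>"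
    "elev_sum (real (Suc k)) \<beta> \<alpha> \<le> elev_sum (real (Suc k)) (\<lambda>_. 1) \<alpha>"
    by (rule elev_sum_mono[OF _ \<alpha>]; simp add: assms)+
  then show ?thesis
    by (simp add: elevate_def elev_sum_const del: of_nat_Suc)
qed

text \<open>(R1) is preserved: \<E> is positive and commutes with second differences.\<close>

lemma elevate_diag_dom:
  assumes k: "k \<ge> 2" and R1: "\<And>a. a \<in> Gamma (k - 2) \<Longrightarrow> diag_dom \<beta> i a"
    and \<alpha>: "\<alpha> \<in> Gamma (Suc k - 2)"
  shows "diag_dom (elevate k \<beta>) i \<alpha>"
proof -
  define n where "n = k - 2"
  let ?K = "real (Suc n)"
  have Kn: "real (Suc k) - 2 = ?K" using k by (simp add: n_def of_nat_diff)
  have "Suc k - 2 = Suc n" using k by (simp add: n_def)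
  then have \<alpha>': "\<alpha> \<in> Gamma (Suc n)" using \<alpha> by simp
  then have deg: "real (mdeg \<alpha>) \<le> ?K" by (simp add: Gamma_iff)
  have "0 = elev_sum ?K (\<lambda>_. 0) \<alpha>" by (simp add: elev_sum_const)
  also have "\<dots> \<le> elev_sum ?K (\<lambda>a. D2 \<beta> i i a - (\<Sum>j\<in>UNIV - {i}. \<bar>D2 \<beta> i j a\<bar>)) \<alpha>"
    by (rule elev_sum_mono[OF _ \<alpha>']) (use R1 in \<open>simp add: n_def diag_dom_def\<close>)
  also have "\<dots> = elev_sum ?K (D2 \<beta> i i) \<alpha> - (\<Sum>j\<in>UNIV - {i}. elev_sum ?K (\<lambda>a. \<bar>D2 \<beta> i j a\<bar>) \<alpha>)"
    by (rule elev_sum_diff_sum)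
  also have "\<dots> \<le> elev_sum ?K (D2 \<beta> i i) \<alpha> - (\<Sum>j\<in>UNIV - {i}. \<bar>elev_sum ?K (D2 \<beta> i j) \<alpha>\<bar>)"
    using elev_sum_abs[OF deg] by (intro diff_left_mono sum_mono) auto
  finally have "0 \<le> (elev_sum ?K (D2 \<beta> i i) \<alpha> - (\<Sum>j\<in>UNIV - {i}. \<bar>elev_sum ?K (D2 \<beta> i j) \<alpha>\<bar>)) / real (Suc k)"
    by simp
  also have "\<dots> = D2 (elevate k \<beta>) i i \<alpha> - (\<Sum>j\<in>UNIV - {i}. \<bar>D2 (elevate k \<beta>) i j \<alpha>\<bar>)"
    by (simp only: D2_elevate Kn diff_divide_distrib sum_divide_distrib abs_divide)
  finally show ?thesis by (simp add: diag_dom_def)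
qed

lemma elevate_at_zero: "elevate k \<beta> (\<lambda>j. 0) = \<beta> (\<lambda>j. 0)"
  by (simp add: elevate_def elev_sum_def mdeg_def del: of_nat_Suc)

lemma elevate_at_corner: "elevate k \<beta> (\<lambda>j. Suc k * ev i j) = \<beta> (\<lambda>j. k * ev i j)"
  unfolding elevate_def elev_sum_def sum_scaled_ev mdeg_scaled_ev decr_scaled_ev
  by (simp del: of_nat_Suc)

lemma elevate_at_ev: "elevate k \<beta> (ev i) = (\<beta> (\<lambda>j. 0) + real k * \<beta> (ev i)) / real (Suc k)"
  unfolding elevate_def elev_sum_def sum_ev mdeg_ev decr_ev by simp

lemma elevate_near_corner:
  "elevate k \<beta> (\<lambda>j. k * ev i j) = (\<beta> (\<lambda>j. k * ev i j) + real k * \<beta> (\<lambda>j. (k - 1) * ev i j)) / real (Suc k)"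
  unfolding elevate_def elev_sum_def sum_scaled_ev mdeg_scaled_ev decr_scaled_ev by simp

lemma elevate_near_corner_edge:
  assumes "i \<noteq> j"
  shows "elevate k \<beta> (\<lambda>l. k * ev i l + ev j l)
    = (\<beta> (\<lambda>l. k * ev i l) + real k * \<beta> (\<lambda>l. (k - 1) * ev i l + ev j l)) / real (Suc k)"
  unfolding elevate_def elev_sum_def sum_scaled_ev_plus_ev mdeg_scaled_ev_plus_ev
    decr_scaled_ev_plus_ev[OF assms]
  by simp

text \<open>The bound 1 - 1/k of (R3), averaged with a coefficient equal to 1 by (R2),
  becomes the bound 1 - 1/(k+1).\<close>

lemma average_with_one_bound:
  assumes "k > 0" and "b \<ge> 1 - 1 / real k"
  shows "1 - 1 / real (Suc k) \<le> (1 + real k * b) / real (Suc k)"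
proof -
  have "real k * b \<ge> real k * (1 - 1 / real k)"
    using assms by (simp add: mult_left_mono)
  then have "real k * b \<ge> real k - 1" using assms(1) by (simp add: algebra_simps)
  have "1 - 1 / real (Suc k) = real k / real (Suc k)" by (simp add: field_simps)
  also have "\<dots> \<le> (1 + real k * b) / real (Suc k)"
    using \<open>real k * b \<ge> real k - 1\<close> by (intro divide_right_mono) auto
  finally show ?thesis .
qed

lemma admissible_elevate:
  assumes k: "k \<ge> 2" and adm: "admissible k \<beta>"
  shows "admissible (Suc k) (elevate k \<beta>)"
proof -
  have R2: "\<beta> (\<lambda>j. 0) = 1" "\<And>i. \<beta> (\<lambda>j. k * ev i j) = 1"
    and R3: "\<And>i. \<beta> (ev i) \<ge> 1 - 1 / real k" "\<And>i. \<beta> (\<lambda>j. (k - 1) * ev i j) \<ge> 1 - 1 / real k"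
      "\<And>i j. i \<noteq> j \<Longrightarrow> \<beta> (\<lambda>l. (k - 1) * ev i l + ev j l) \<ge> 1 - 1 / real k"
    using adm by (simp_all add: admissible_def)
  have "k > 0" using k by simp
  note R3_elev = average_with_one_bound[OF this]
  have "\<forall>\<alpha>\<in>Gamma (Suc k). 0 \<le> elevate k \<beta> \<alpha> \<and> elevate k \<beta> \<alpha> \<le> 1"
    using adm by (intro ballI elevate_bounds) (auto simp: admissible_def)
  moreover have "\<forall>\<alpha>\<in>Gamma (Suc k - 2). \<forall>i. diag_dom (elevate k \<beta>) i \<alpha>"
    using elevate_diag_dom[OF k admissible_diag_dom[OF adm]] by blast
  moreover have "elevate k \<beta> (\<lambda>j. 0) = 1" "\<And>i. elevate k \<beta> (\<lambda>j. Suc k * ev i j) = 1"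
    by (simp_all only: elevate_at_zero elevate_at_corner R2)
  moreover have "elevate k \<beta> (ev i) \<ge> 1 - 1 / real (Suc k)" for i
    using R3_elev[OF R3(1)] by (simp only: elevate_at_ev R2)
  moreover have "elevate k \<beta> (\<lambda>j. k * ev i j) \<ge> 1 - 1 / real (Suc k)" for i
    using R3_elev[OF R3(2)] by (simp only: elevate_near_corner R2)
  moreover have "elevate k \<beta> (\<lambda>l. k * ev i l + ev j l) \<ge> 1 - 1 / real (Suc k)" if "i \<noteq> j" for i j
    using R3_elev[OF R3(3)[OF that]] by (simp only: elevate_near_corner_edge[OF that] R2)
  ultimately show ?thesis
    by (simp add: admissible_def diag_dom_def del: of_nat_Suc)
qed

lemma Ak_nested:
  assumes "k \<ge> 2"
  shows "(Ak k :: (real^'n::finite \<Rightarrow> real) set) \<subseteq> Ak (Suc k)"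
proof
  fix A :: "real^'n \<Rightarrow> real"
  assume "A \<in> Ak k"
  then obtain \<beta> where "admissible k \<beta>" and "\<forall>w\<in>unit_simplex. A w = bpoly k \<beta> w"
    by (auto simp: Ak_iff)
  then show "A \<in> Ak (Suc k)"
    unfolding Ak_iff using admissible_elevate[OF assms] bpoly_elevate by metis
qed


subsection \<open>Derivatives along segments\<close>

lemma wlast_line: "wlast (x + t *\<^sub>R u) = wlast x - t * (\<Sum>i\<in>UNIV. u$i)"
  by (simp add: wlast_def sum.distrib sum_distrib_left)

lemma wpow_decr:
  "wpow (decr i \<gamma>) y = (y$i) ^ (\<gamma> i - 1) * (\<Prod>j\<in>UNIV - {i}. (y$j) ^ (\<gamma> j))"
proof -
  have "wpow (decr i \<gamma>) y = (y$i) ^ (\<gamma> i - 1) * (\<Prod>j\<in>UNIV - {i}. (y$j) ^ (decr i \<gamma> j))"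
    unfolding wpow_def by (subst prod.remove[of UNIV i]) (auto simp: decr_def ev_def)
  also have "(\<Prod>j\<in>UNIV - {i}. (y$j) ^ (decr i \<gamma> j)) = (\<Prod>j\<in>UNIV - {i}. (y$j) ^ (\<gamma> j))"
    by (rule prod.cong) (auto simp: decr_def ev_def)
  finally show ?thesis .
qed

lemma deriv_wpow:
  fixes x u :: "real^'n::finite"
  shows "((\<lambda>t. wpow \<gamma> (x + t *\<^sub>R u)) has_real_derivative
     (\<Sum>i\<in>UNIV. u$i * (real (\<gamma> i) * wpow (decr i \<gamma>) (x + t *\<^sub>R u)))) (at t)"
proof -
  have eq: "(\<lambda>t. wpow \<gamma> (x + t *\<^sub>R u)) = (\<lambda>t. \<Prod>i\<in>UNIV. (\<lambda>i t. (x$i + t * u$i) ^ (\<gamma> i)) i t)"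
    by (simp add: wpow_def)
  have d: "((\<lambda>t. (x$i + t * u$i) ^ (\<gamma> i)) has_real_derivative
      real (\<gamma> i) * (x$i + t * u$i) ^ (\<gamma> i - 1) * u$i) (at t)" for i
    by (auto intro!: derivative_eq_intros)
  show ?thesis unfolding eq
    by (rule DERIV_cong[OF has_field_derivative_prod[OF d]], rule sum.cong[OF refl])
      (simp add: wpow_decr)
qed

lemma deriv_bern:
  fixes x u :: "real^'n::finite"
  assumes y: "y = x + t *\<^sub>R u"
  shows "((\<lambda>t. bern K \<gamma> (x + t *\<^sub>R u)) has_real_derivative
     (\<Sum>i\<in>UNIV. u$i * (real (\<gamma> i) * (mcoef K \<gamma> * wpow (decr i \<gamma>) y * wlast y ^ (K - mdeg \<gamma>))))
     - (\<Sum>i\<in>UNIV. u$i) * (real (K - mdeg \<gamma>) * (mcoef K \<gamma> * wpow \<gamma> y * wlast y ^ (K - mdeg \<gamma> - 1)))) (at t)"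
proof -
  have wl: "((\<lambda>t. wlast (x + t *\<^sub>R u) ^ m) has_real_derivative
      real m * wlast y ^ (m - 1) * (- (\<Sum>i\<in>UNIV. u$i))) (at t)" for m
    unfolding wlast_line y by (auto intro!: derivative_eq_intros)
  have eq: "(\<lambda>t. bern K \<gamma> (x + t *\<^sub>R u))
      = (\<lambda>t. mcoef K \<gamma> * (wpow \<gamma> (x + t *\<^sub>R u) * wlast (x + t *\<^sub>R u) ^ (K - mdeg \<gamma>)))"
    by (simp add: bern_eq mult.assoc fun_eq_iff)
  show ?thesis unfolding eq
    by (rule DERIV_cong[OF DERIV_cmult[OF DERIV_mult[OF deriv_wpow wl]]])
      (simp add: y algebra_simps sum_distrib_left sum_distrib_right)
qed

lemma sum_deriv_coord:
  fixes y :: "real^'n::finite"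
  shows "(\<Sum>\<gamma>\<in>Gamma (Suc k). real (\<gamma> i) *
      (\<beta> \<gamma> * (mcoef (Suc k) \<gamma> * wpow (decr i \<gamma>) y * wlast y ^ (Suc k - mdeg \<gamma>))))
   = real (Suc k) * bpoly k (\<lambda>\<alpha>. \<beta> (incr i \<alpha>)) y"
proof -
  have "(\<Sum>\<gamma>\<in>Gamma (Suc k). real (\<gamma> i) *
      (\<beta> \<gamma> * (mcoef (Suc k) \<gamma> * wpow (decr i \<gamma>) y * wlast y ^ (Suc k - mdeg \<gamma>))))
    = (\<Sum>\<alpha>\<in>Gamma k. \<beta> (incr i \<alpha>) * (mcoef (Suc k) (incr i \<alpha>) * real (Suc (\<alpha> i)))
        * wpow \<alpha> y * wlast y ^ (k - mdeg \<alpha>))"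
    by (subst sum_Gamma_incr) (simp only: decr_incr mdeg_incr diff_Suc_Suc mult_ac)
  also have "\<dots> = (\<Sum>\<alpha>\<in>Gamma k. \<beta> (incr i \<alpha>) * (real (Suc k) * bern k \<alpha> y))"
  proof (rule sum.cong[OF refl])
    fix \<alpha> :: "'n \<Rightarrow> nat"
    assume "\<alpha> \<in> Gamma k"
    then show "\<beta> (incr i \<alpha>) * (mcoef (Suc k) (incr i \<alpha>) * real (Suc (\<alpha> i)))
        * wpow \<alpha> y * wlast y ^ (k - mdeg \<alpha>) = \<beta> (incr i \<alpha>) * (real (Suc k) * bern k \<alpha> y)"
      by (simp only: Gamma_iff mcoef_incr) (simp add: bern_eq)
  qed
  finally show ?thesis by (simp add: bpoly_def sum_distrib_left mult_ac)
qed

lemma sum_deriv_last: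
  fixes y :: "real^'n::finite"
  shows "(\<Sum>\<gamma>\<in>Gamma (Suc k). real (Suc k - mdeg \<gamma>) *
      (\<beta> \<gamma> * (mcoef (Suc k) \<gamma> * wpow \<gamma> y * wlast y ^ (Suc k - mdeg \<gamma> - 1))))
   = real (Suc k) * bpoly k \<beta> y"
proof -
  have "(\<Sum>\<gamma>\<in>Gamma (Suc k). real (Suc k - mdeg \<gamma>) *
      (\<beta> \<gamma> * (mcoef (Suc k) \<gamma> * wpow \<gamma> y * wlast y ^ (Suc k - mdeg \<gamma> - 1))))
    = (\<Sum>\<alpha>\<in>Gamma k. \<beta> \<alpha> * (mcoef (Suc k) \<alpha> * real (Suc k - mdeg \<alpha>))
        * wpow \<alpha> y * wlast y ^ (Suc k - mdeg \<alpha> - 1))"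
    by (subst sum_Gamma_top) (simp only: mult_ac)
  also have "\<dots> = (\<Sum>\<alpha>\<in>Gamma k. \<beta> \<alpha> * (real (Suc k) * bern k \<alpha> y))"
  proof (rule sum.cong[OF refl])
    fix \<alpha> :: "'n \<Rightarrow> nat"
    assume "\<alpha> \<in> Gamma k"
    then have "Suc k - mdeg \<alpha> - 1 = k - mdeg \<alpha>" by (simp add: Gamma_iff)
    with \<open>\<alpha> \<in> Gamma k\<close> show "\<beta> \<alpha> * (mcoef (Suc k) \<alpha> * real (Suc k - mdeg \<alpha>))
        * wpow \<alpha> y * wlast y ^ (Suc k - mdeg \<alpha> - 1) = \<beta> \<alpha> * (real (Suc k) * bern k \<alpha> y)"
      by (simp only: Gamma_iff mcoef_same) (simp add: bern_eq)
  qed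
  finally show ?thesis by (simp add: bpoly_def sum_distrib_left mult_ac)
qed

lemma deriv_bpoly:
  fixes x u :: "real^'n::finite"
  shows "((\<lambda>t. bpoly (Suc k) \<beta> (x + t *\<^sub>R u)) has_real_derivative
     real (Suc k) * bpoly k (\<lambda>\<alpha>. \<Sum>i\<in>UNIV. u$i * D1 \<beta> i \<alpha>) (x + t *\<^sub>R u)) (at t)"
proof -
  define y where "y = x + t *\<^sub>R u"
  define S where "S = (\<Sum>i\<in>UNIV. u$i)"
  have "((\<lambda>t. bpoly (Suc k) \<beta> (x + t *\<^sub>R u)) has_real_derivative
     (\<Sum>\<gamma>\<in>Gamma (Suc k). \<beta> \<gamma> *
       ((\<Sum>i\<in>UNIV. u$i * (real (\<gamma> i) * (mcoef (Suc k) \<gamma> * wpow (decr i \<gamma>) y * wlast y ^ (Suc k - mdeg \<gamma>))))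
       - S * (real (Suc k - mdeg \<gamma>) * (mcoef (Suc k) \<gamma> * wpow \<gamma> y * wlast y ^ (Suc k - mdeg \<gamma> - 1)))))) (at t)"
    unfolding bpoly_def S_def by (intro DERIV_sum DERIV_cmult deriv_bern y_def)
  also have "(\<Sum>\<gamma>\<in>Gamma (Suc k). \<beta> \<gamma> *
       ((\<Sum>i\<in>UNIV. u$i * (real (\<gamma> i) * (mcoef (Suc k) \<gamma> * wpow (decr i \<gamma>) y * wlast y ^ (Suc k - mdeg \<gamma>))))
       - S * (real (Suc k - mdeg \<gamma>) * (mcoef (Suc k) \<gamma> * wpow \<gamma> y * wlast y ^ (Suc k - mdeg \<gamma> - 1)))))
    = (\<Sum>i\<in>UNIV. u$i * (\<Sum>\<gamma>\<in>Gamma (Suc k). real (\<gamma> i) *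
          (\<beta> \<gamma> * (mcoef (Suc k) \<gamma> * wpow (decr i \<gamma>) y * wlast y ^ (Suc k - mdeg \<gamma>)))))
      - S * (\<Sum>\<gamma>\<in>Gamma (Suc k). real (Suc k - mdeg \<gamma>) *
          (\<beta> \<gamma> * (mcoef (Suc k) \<gamma> * wpow \<gamma> y * wlast y ^ (Suc k - mdeg \<gamma> - 1))))"
    by (simp add: algebra_simps sum_distrib_left sum_subtractf sum.swap[of _ "Gamma (Suc k)"])
  also have "\<dots> = (\<Sum>i\<in>UNIV. u$i * (real (Suc k) * bpoly k (\<lambda>\<alpha>. \<beta> (incr i \<alpha>)) y))
      - S * (real (Suc k) * bpoly k \<beta> y)"
    by (simp only: sum_deriv_coord sum_deriv_last)
  also have "\<dots> = real (Suc k) * bpoly k (\<lambda>\<alpha>. \<Sum>i\<in>UNIV. u$i * D1 \<beta> i \<alpha>) y"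
    by (simp add: bpoly_def S_def D1_incr algebra_simps sum_distrib_left sum_distrib_right
        sum_subtractf sum.swap[of _ "Gamma k"] del: of_nat_Suc)
  finally show ?thesis by (simp add: y_def)
qed

lemma D1_directional:
  "D1 (\<lambda>\<alpha>. \<Sum>i\<in>UNIV. u$i * D1 \<beta> i \<alpha>) j \<alpha> = (\<Sum>i\<in>UNIV. u$i * D2 \<beta> j i \<alpha>)"
  by (simp add: D1_def[of "\<lambda>\<alpha>. \<Sum>i\<in>UNIV. u$i * D1 \<beta> i \<alpha>"] D2_def right_diff_distrib sum_subtractf)

lemma deriv2_bpoly:
  fixes x u :: "real^'n::finite"
  shows "((\<lambda>t. real (Suc (Suc n)) * bpoly (Suc n) (\<lambda>\<alpha>. \<Sum>i\<in>UNIV. u$i * D1 \<beta> i \<alpha>) (x + t *\<^sub>R u))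
     has_real_derivative real (Suc (Suc n)) * (real (Suc n) *
       bpoly n (\<lambda>\<alpha>. \<Sum>j\<in>UNIV. \<Sum>i\<in>UNIV. u$j * u$i * D2 \<beta> j i \<alpha>) (x + t *\<^sub>R u))) (at t)"
proof -
  have "(\<lambda>\<alpha>. \<Sum>j\<in>UNIV. u$j * D1 (\<lambda>\<alpha>. \<Sum>i\<in>UNIV. u$i * D1 \<beta> i \<alpha>) j \<alpha>)
      = (\<lambda>\<alpha>. \<Sum>j\<in>UNIV. \<Sum>i\<in>UNIV. u$j * u$i * D2 \<beta> j i \<alpha>)"
    by (simp add: D1_directional sum_distrib_left mult.assoc)
  then show ?thesis
    using DERIV_cmult[OF deriv_bpoly[of n "\<lambda>\<alpha>. \<Sum>i\<in>UNIV. u$i * D1 \<beta> i \<alpha>" x u t]] by simp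
qed


subsection \<open>Convexity\<close>

lemma cross_term_bound:
  fixes a b m :: real
  shows "a * b * m \<ge> - (\<bar>m\<bar> * (a\<^sup>2 + b\<^sup>2) / 2)"
proof -
  have "\<bar>a * b\<bar> \<le> (a\<^sup>2 + b\<^sup>2) / 2"
    using sum_squares_bound[of "\<bar>a\<bar>" "\<bar>b\<bar>"] by (simp add: abs_mult power2_eq_square)
  then have "\<bar>m\<bar> * \<bar>a * b\<bar> \<le> \<bar>m\<bar> * (a\<^sup>2 + b\<^sup>2) / 2"
    using mult_left_mono[of _ _ "\<bar>m\<bar>"] by fastforce
  moreover have "- (\<bar>m\<bar> * \<bar>a * b\<bar>) \<le> a * b * m"
    by (metis abs_ge_minus_self abs_mult minus_le_iff mult.commute)
  ultimately show ?thesis by linarith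
qed

lemma diag_dominant_psd:
  fixes M :: "'n::finite \<Rightarrow> 'n \<Rightarrow> real"
  assumes sym: "\<And>i j. M i j = M j i"
    and dom: "\<And>i. M i i - (\<Sum>j\<in>UNIV - {i}. \<bar>M i j\<bar>) \<ge> 0"
  shows "(\<Sum>i\<in>UNIV. \<Sum>j\<in>UNIV. u i * u j * M i j) \<ge> 0"
proof -
  define F where "F i j = (if i = j then 0 else \<bar>M i j\<bar>)" for i j
  have term_bound: "u i * u j * M i j \<ge> (if i = j then (u i)\<^sup>2 * M i i else 0) - F i j * ((u i)\<^sup>2 + (u j)\<^sup>2) / 2"
    for i j
    using cross_term_bound[where a = "u i" and b = "u j" and m = "M i j"] by (simp add: F_def power2_eq_square)
  have F_symmetric: "F i j = F j i" for i j
    by (simp add: F_def sym)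
  have row: "(\<Sum>j\<in>UNIV. F i j) = (\<Sum>j\<in>UNIV - {i}. \<bar>M i j\<bar>)" for i
    by (simp add: F_def sum.remove[of UNIV i] sum.If_cases Compl_eq_Diff_UNIV)
  have "0 \<le> (\<Sum>i\<in>UNIV. (u i)\<^sup>2 * (M i i - (\<Sum>j\<in>UNIV. F i j)))"
    using dom by (intro sum_nonneg mult_nonneg_nonneg) (simp_all add: row)
  also have "\<dots> = (\<Sum>i\<in>UNIV. (u i)\<^sup>2 * M i i)
      - ((\<Sum>i\<in>UNIV. \<Sum>j\<in>UNIV. F i j * (u i)\<^sup>2) + (\<Sum>i\<in>UNIV. \<Sum>j\<in>UNIV. F i j * (u j)\<^sup>2)) / 2"
  proof -
    have "(\<Sum>i\<in>UNIV. \<Sum>j\<in>UNIV. F i j * (u j)\<^sup>2) = (\<Sum>i\<in>UNIV. \<Sum>j\<in>UNIV. F i j * (u i)\<^sup>2)"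
      by (subst sum.swap) (simp add: F_symmetric)
    then show ?thesis
      by (simp add: sum_subtractf sum_distrib_left sum_distrib_right algebra_simps)
  qed
  also have "\<dots> = (\<Sum>i\<in>UNIV. \<Sum>j\<in>UNIV. (if i = j then (u i)\<^sup>2 * M i i else 0) - F i j * ((u i)\<^sup>2 + (u j)\<^sup>2) / 2)"
    by (simp add: sum_subtractf sum.distrib distrib_left add_divide_distrib sum_divide_distrib)
  also have "\<dots> \<le> (\<Sum>i\<in>UNIV. \<Sum>j\<in>UNIV. u i * u j * M i j)"
    by (intro sum_mono term_bound)
  finally show ?thesis .
qed

lemma simplex_segment:
  assumes x: "x \<in> unit_simplex" and y: "y \<in> unit_simplex" and t: "0 \<le> t" "t \<le> 1"
  shows "x + t *\<^sub>R (y - x) \<in> unit_simplex"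
proof -
  have "x + t *\<^sub>R (y - x) = (1 - t) *\<^sub>R x + t *\<^sub>R y" by (simp add: algebra_simps)
  moreover have "0 \<le> (1 - t) * x$i + t * y$i" for i
    using x y t by (auto simp: unit_simplex_def)
  moreover have "(\<Sum>i\<in>UNIV. (1 - t) * x$i + t * y$i) \<le> 1"
  proof -
    have "(\<Sum>i\<in>UNIV. (1 - t) * x$i + t * y$i) = (1 - t) * (\<Sum>i\<in>UNIV. x$i) + t * (\<Sum>i\<in>UNIV. y$i)"
      by (simp add: sum.distrib sum_distrib_left)
    also have "\<dots> \<le> (1 - t) * 1 + t * 1"
      using x y t by (intro add_mono mult_left_mono) (auto simp: unit_simplex_def)
    finally show ?thesis by simp
  qed
  ultimately show ?thesis by (simp add: unit_simplex_def)
qed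

lemma bpoly_nonneg:
  "w \<in> unit_simplex \<Longrightarrow> (\<And>\<alpha>. \<alpha> \<in> Gamma k \<Longrightarrow> f \<alpha> \<ge> 0) \<Longrightarrow> bpoly k f w \<ge> 0"
  unfolding bpoly_def by (intro sum_nonneg mult_nonneg_nonneg bern_nonneg) auto

lemma deriv2_bpoly_nonneg:
  assumes adm: "admissible (Suc (Suc n)) \<beta>" and inS: "x + s *\<^sub>R u \<in> unit_simplex"
  shows "0 \<le> real (Suc (Suc n)) * (real (Suc n) *
    bpoly n (\<lambda>\<alpha>. \<Sum>j\<in>UNIV. \<Sum>i\<in>UNIV. u$j * u$i * D2 \<beta> j i \<alpha>) (x + s *\<^sub>R u))"
proof -
  have "0 \<le> (\<Sum>j\<in>UNIV. \<Sum>i\<in>UNIV. u$j * u$i * D2 \<beta> j i \<alpha>)" if "\<alpha> \<in> Gamma n" for \<alpha>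
  proof (rule diag_dominant_psd)
    show "D2 \<beta> i j \<alpha> = D2 \<beta> j i \<alpha>" for i j by (rule D2_sym)
    show "D2 \<beta> i i \<alpha> - (\<Sum>j\<in>UNIV - {i}. \<bar>D2 \<beta> i j \<alpha>\<bar>) \<ge> 0" for i
      using admissible_diag_dom[OF adm, of \<alpha> i] that by (simp add: diag_dom_def)
  qed
  then show ?thesis by (simp add: bpoly_nonneg[OF inS])
qed

lemma above_tangent_unit_interval:
  fixes g g' g'' :: "real \<Rightarrow> real"
  assumes d1: "\<And>t. (g has_real_derivative g' t) (at t)"
    and d2: "\<And>t. (g' has_real_derivative g'' t) (at t)"
    and pos: "\<And>t. 0 \<le> t \<Longrightarrow> t \<le> 1 \<Longrightarrow> g'' t \<ge> 0"
    and s: "0 \<le> s" "s \<le> 1" and r: "0 \<le> r" "r \<le> 1"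
  shows "g r \<ge> g s + g' s * (r - s)"
proof -
  have mono: "g' a \<le> g' b" if "0 \<le> a" "a \<le> b" "b \<le> 1" for a b
    by (rule deriv_nonneg_imp_mono[OF d2]) (use that pos in auto)
  define h where "h t = g t - g' s * t" for t
  have dh: "(h has_real_derivative (g' t - g' s)) (at t)" for t
    unfolding h_def by (auto intro!: derivative_eq_intros d1)
  show ?thesis
  proof (cases "s \<le> r")
    case True
    have "h s \<le> h r"
      by (rule deriv_nonneg_imp_mono[OF dh]) (use True s r mono in auto)
    then show ?thesis by (simp add: h_def algebra_simps)
  next
    case False
    have "- h r \<le> - h s"
      by (rule deriv_nonneg_imp_mono[OF DERIV_minus[OF dh]]) (use False s r mono in auto)
    then show ?thesis by (simp add: h_def algebra_simps)
  qed
qed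

lemma convex_unit_interval:
  fixes g g' g'' :: "real \<Rightarrow> real"
  assumes d1: "\<And>t. (g has_real_derivative g' t) (at t)"
    and d2: "\<And>t. (g' has_real_derivative g'' t) (at t)"
    and pos: "\<And>t. 0 \<le> t \<Longrightarrow> t \<le> 1 \<Longrightarrow> g'' t \<ge> 0"
    and t: "0 \<le> t" "t \<le> 1"
  shows "g t \<le> (1 - t) * g 0 + t * g 1"
proof -
  have "g 0 \<ge> g t + g' t * (0 - t)" "g 1 \<ge> g t + g' t * (1 - t)"
    by (rule above_tangent_unit_interval[OF d1 d2 pos]; use t in simp)+
  then have "(1 - t) * g 0 + t * g 1 \<ge> (1 - t) * (g t + g' t * (0 - t)) + t * (g t + g' t * (1 - t))"
    using t by (intro add_mono mult_left_mono) auto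
  also have "(1 - t) * (g t + g' t * (0 - t)) + t * (g t + g' t * (1 - t)) = g t"
    by (simp add: algebra_simps)
  finally show ?thesis .
qed

lemma bpoly_above_tangent:
  fixes x y :: "real^'n::finite"
  assumes adm: "admissible (Suc (Suc n)) \<beta>" and x: "x \<in> unit_simplex" and y: "y \<in> unit_simplex"
  shows "bpoly (Suc (Suc n)) \<beta> y
    \<ge> bpoly (Suc (Suc n)) \<beta> x + real (Suc (Suc n)) * bpoly (Suc n) (\<lambda>\<alpha>. \<Sum>i\<in>UNIV. (y - x)$i * D1 \<beta> i \<alpha>) x"
proof -
  have "bpoly (Suc (Suc n)) \<beta> (x + 1 *\<^sub>R (y - x)) \<ge> bpoly (Suc (Suc n)) \<beta> (x + 0 *\<^sub>R (y - x))
      + real (Suc (Suc n)) * bpoly (Suc n) (\<lambda>\<alpha>. \<Sum>i\<in>UNIV. (y - x)$i * D1 \<beta> i \<alpha>) (x + 0 *\<^sub>R (y - x)) * (1 - 0)"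
    by (rule above_tangent_unit_interval[OF deriv_bpoly deriv2_bpoly
          deriv2_bpoly_nonneg[OF adm simplex_segment[OF x y]]]) auto
  then show ?thesis by simp
qed

lemma convex_unit_simplex: "convex (unit_simplex :: (real^'n::finite) set)"
  unfolding convex_alt
proof (intro ballI allI impI)
  fix x y :: "real^'n" and t :: real
  assume "x \<in> unit_simplex" "y \<in> unit_simplex" "0 \<le> t \<and> t \<le> 1"
  then have "x + t *\<^sub>R (y - x) \<in> unit_simplex" by (simp add: simplex_segment)
  then show "(1 - t) *\<^sub>R x + t *\<^sub>R y \<in> unit_simplex" by (simp add: algebra_simps)
qed

lemma bpoly_convex_on:
  assumes adm: "admissible (Suc (Suc n)) \<beta>"
  shows "convex_on unit_simplex (bpoly (Suc (Suc n)) \<beta> :: real^'n::finite \<Rightarrow> real)"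
proof (rule convex_onI[OF _ convex_unit_simplex])
  fix t :: real and x y :: "real^'n"
  assume t: "0 < t" "t < 1" and x: "x \<in> unit_simplex" and y: "y \<in> unit_simplex"
  have "bpoly (Suc (Suc n)) \<beta> (x + t *\<^sub>R (y - x))
      \<le> (1 - t) * bpoly (Suc (Suc n)) \<beta> (x + 0 *\<^sub>R (y - x)) + t * bpoly (Suc (Suc n)) \<beta> (x + 1 *\<^sub>R (y - x))"
    by (rule convex_unit_interval[OF deriv_bpoly deriv2_bpoly
          deriv2_bpoly_nonneg[OF adm simplex_segment[OF x y]]]) (use t in auto)
  moreover have "(1 - t) *\<^sub>R x + t *\<^sub>R y = x + t *\<^sub>R (y - x)" by (simp add: algebra_simps)
  ultimately show "bpoly (Suc (Suc n)) \<beta> ((1 - t) *\<^sub>R x + t *\<^sub>R y)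
      \<le> (1 - t) * bpoly (Suc (Suc n)) \<beta> x + t * bpoly (Suc (Suc n)) \<beta> y"
    by simp
qed


subsection \<open>Values at the vertices and the bounds of a dependence function\<close>

lemma bpoly_single:
  assumes "\<alpha>0 \<in> Gamma n" "bern n \<alpha>0 z = 1" "\<And>\<alpha>. \<alpha> \<in> Gamma n \<Longrightarrow> \<alpha> \<noteq> \<alpha>0 \<Longrightarrow> bern n \<alpha> z = 0"
  shows "bpoly n f z = f \<alpha>0"
proof -
  have "bpoly n f z = f \<alpha>0 * bern n \<alpha>0 z + (\<Sum>\<alpha>\<in>Gamma n - {\<alpha>0}. f \<alpha> * bern n \<alpha> z)"
    unfolding bpoly_def by (rule sum.remove[OF finite_Gamma assms(1)])
  also have "(\<Sum>\<alpha>\<in>Gamma n - {\<alpha>0}. f \<alpha> * bern n \<alpha> z) = 0"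
    by (rule sum.neutral) (use assms(3) in auto)
  finally show ?thesis using assms(2) by simp
qed

lemma bpoly_at_zero: "bpoly n f (0::real^'n::finite) = f (\<lambda>_. 0)"
proof (rule bpoly_single)
  show "(\<lambda>_. 0) \<in> (Gamma n :: ('n \<Rightarrow> nat) set)" by (simp add: Gamma_def)
  show "bern n (\<lambda>_. 0) (0::real^'n) = 1" by (simp add: bern_def wlast_def)
  fix \<alpha> :: "'n \<Rightarrow> nat" assume "\<alpha> \<noteq> (\<lambda>_. 0)"
  then obtain i where "\<alpha> i \<noteq> 0" by auto
  then have "(\<Prod>j\<in>UNIV. ((0::real^'n)$j) ^ (\<alpha> j)) = 0" by (auto simp: prod_zero_iff)
  then show "bern n \<alpha> (0::real^'n) = 0" by (simp add: bern_def)
qed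

definition vertex :: "'n::finite \<Rightarrow> real^'n" where
  "vertex i = (\<chi> j. if j = i then 1 else 0)"

lemma vertex_nth: "vertex i $ j = (if j = i then 1 else 0)"
  by (simp add: vertex_def)

lemma wlast_vertex: "wlast (vertex i) = 0"
  by (simp add: wlast_def vertex_nth)

lemma vertex_in_simplex: "vertex i \<in> unit_simplex"
  by (simp add: unit_simplex_def vertex_nth)

lemma zero_in_simplex: "0 \<in> unit_simplex"
  by (simp add: unit_simplex_def)

lemma bpoly_at_vertex: "bpoly n f (vertex (i::'n::finite)) = f (\<lambda>j. n * ev i j)"
proof (rule bpoly_single)
  show "(\<lambda>j. n * ev i j) \<in> Gamma n" by (simp add: Gamma_iff mdeg_scaled_ev)
  have "(\<Prod>j\<in>UNIV. fact (n * ev i j) :: real) = (\<Prod>j\<in>UNIV. if j = i then fact n else 1)"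
    by (rule prod.cong) (auto simp: ev_def)
  moreover have "(\<Prod>j\<in>UNIV. (vertex i $ j) ^ (n * ev i j)) = 1"
    by (rule prod.neutral) (auto simp: ev_def vertex_nth)
  ultimately show "bern n (\<lambda>j. n * ev i j) (vertex i) = 1"
    using mdeg_scaled_ev[of n i] by (simp add: bern_def mdeg_def)
  fix \<alpha> :: "'n \<Rightarrow> nat" assume \<alpha>: "\<alpha> \<in> Gamma n" "\<alpha> \<noteq> (\<lambda>j. n * ev i j)"
  show "bern n \<alpha> (vertex i) = 0"
  proof (cases "\<exists>j. j \<noteq> i \<and> \<alpha> j \<noteq> 0")
    case True
    then have "(\<Prod>j\<in>UNIV. (vertex i $ j) ^ (\<alpha> j)) = 0"
      by (auto simp: prod_zero_iff vertex_nth)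
    then show ?thesis by (simp add: bern_def)
  next
    case False
    then have "\<alpha> = (\<lambda>j. \<alpha> i * ev i j)" by (auto simp: fun_eq_iff ev_def)
    then have "mdeg \<alpha> = \<alpha> i" and "\<alpha> i \<noteq> n" using \<alpha>(2) by (metis mdeg_scaled_ev, auto)
    then have "mdeg \<alpha> < n" using \<alpha>(1) by (simp add: Gamma_iff)
    then show ?thesis by (simp add: bern_eq wlast_vertex)
  qed
qed

text \<open>Lower bound w_d \<le> B(\<beta>)(w): the tangent plane at the vertex 0, where
  B(\<beta>) = \<beta>_0 = 1 and the slopes are K(\<beta>_{e_i} - 1) \<ge> -1 by (R3).\<close>

lemma bpoly_ge_wlast:
  fixes w :: "real^'n::finite"
  assumes adm: "admissible (Suc (Suc n)) \<beta>" and w: "w \<in> unit_simplex"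
  shows "bpoly (Suc (Suc n)) \<beta> w \<ge> wlast w"
proof -
  let ?K = "real (Suc (Suc n))"
  have R2: "\<beta> (\<lambda>j. 0) = 1" and R3: "\<And>i. \<beta> (ev i) \<ge> 1 - 1 / ?K"
    using adm by (simp_all add: admissible_def)
  have slope: "?K * bpoly (Suc n) (\<lambda>\<alpha>. \<Sum>i\<in>UNIV. (w - 0)$i * D1 \<beta> i \<alpha>) 0
      = (\<Sum>i\<in>UNIV. w$i * (?K * (\<beta> (ev i) - 1)))"
  proof -
    have "(\<lambda>j. (0::nat) + ev i j) = ev i" for i by (simp add: fun_eq_iff)
    then show ?thesis by (simp add: bpoly_at_zero D1_def R2 sum_distrib_left mult_ac)
  qed
  also have "\<dots> \<ge> (\<Sum>i\<in>UNIV. w$i * (-1))"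
  proof (intro sum_mono mult_left_mono)
    fix i
    have "?K * (\<beta> (ev i) - 1) \<ge> ?K * (- 1 / ?K)"
      using R3[of i] by (intro mult_left_mono) auto
    then show "-1 \<le> ?K * (\<beta> (ev i) - 1)" by simp
    show "0 \<le> w$i" using w by (simp add: unit_simplex_def)
  qed
  finally show ?thesis
    using bpoly_above_tangent[OF adm zero_in_simplex w]
    by (simp add: bpoly_at_zero R2 wlast_def sum_negf)
qed

lemma bpoly_slope_at_vertex:
  "bpoly (Suc n) (\<lambda>\<alpha>. \<Sum>j\<in>UNIV. (w - vertex i)$j * D1 \<beta> j \<alpha>) (vertex (i::'n::finite))
    = (\<Sum>j\<in>UNIV. (w$j - (if j = i then 1 else 0))
        * (\<beta> (\<lambda>l. Suc n * ev i l + ev j l) - \<beta> (\<lambda>l. Suc n * ev i l)))"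
  by (simp add: bpoly_at_vertex D1_def vertex_nth)

text \<open>Lower bound w_i \<le> B(\<beta>)(w): the tangent plane at e_i, where B(\<beta>) = 1 by (R2)
  and the coefficients next to the corner are at least 1 - 1/K by (R3).\<close>

lemma bpoly_ge_coord:
  fixes w :: "real^'n::finite"
  assumes adm: "admissible (Suc (Suc n)) \<beta>" and w: "w \<in> unit_simplex"
  shows "bpoly (Suc (Suc n)) \<beta> w \<ge> w$i"
proof -
  let ?K = "real (Suc (Suc n))"
  define p where "p = 1 - 1 / ?K"
  define c where "c j = \<beta> (\<lambda>l. Suc n * ev i l + ev j l)" for j
  define b where "b = \<beta> (\<lambda>l. Suc n * ev i l)"
  have corner: "\<beta> (\<lambda>j. Suc (Suc n) * ev i j) = 1"
    and R3: "\<beta> (\<lambda>j. (Suc (Suc n) - 1) * ev i j) \<ge> p"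
      "\<And>j. i \<noteq> j \<Longrightarrow> \<beta> (\<lambda>l. (Suc (Suc n) - 1) * ev i l + ev j l) \<ge> p"
    using adm unfolding admissible_def p_def by blast+
  have ci: "c i = 1"
  proof -
    have "(\<lambda>l. Suc n * ev i l + ev i l) = (\<lambda>j. Suc (Suc n) * ev i j)"
      by (simp add: fun_eq_iff ev_def)
    then show ?thesis using corner by (simp add: c_def)
  qed
  have cj: "c j \<ge> p + (if j = i then 1 - p else 0)" for j
    using ci R3(2)[of j] by (cases "j = i") (simp_all add: c_def)
  have b: "b \<ge> p" using R3(1) by (simp add: b_def)
  have wpos: "0 \<le> w$j" "0 \<le> wlast w" for j
    using w by (auto simp: unit_simplex_def wlast_def)
  have "bpoly (Suc n) (\<lambda>\<alpha>. \<Sum>j\<in>UNIV. (w - vertex i)$j * D1 \<beta> j \<alpha>) (vertex i)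
      = (\<Sum>j\<in>UNIV. (w$j - (if j = i then 1 else 0)) * (c j - b))"
    by (simp only: bpoly_slope_at_vertex c_def b_def)
  also have "\<dots> = (\<Sum>j\<in>UNIV. w$j * c j - b * w$j - (if j = i then c i - b else 0))"
    by (rule sum.cong) (auto simp: algebra_simps)
  also have "\<dots> = (\<Sum>j\<in>UNIV. w$j * c j) - b * (\<Sum>j\<in>UNIV. w$j) - (c i - b)"
    by (simp add: sum_subtractf sum_distrib_left)
  also have "\<dots> = (\<Sum>j\<in>UNIV. w$j * c j) - 1 + b * wlast w"
    using ci by (simp add: wlast_def algebra_simps)
  also have "\<dots> \<ge> (\<Sum>j\<in>UNIV. w$j * (p + (if j = i then 1 - p else 0))) - 1 + p * wlast w"
    using cj b wpos by (intro add_mono diff_right_mono sum_mono mult_left_mono mult_right_mono) auto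
  also have "(\<Sum>j\<in>UNIV. w$j * (p + (if j = i then 1 - p else 0))) - 1 + p * wlast w
      = p * ((\<Sum>j\<in>UNIV. w$j) + wlast w) + (1 - p) * w$i - 1"
    by (simp add: distrib_left sum.distrib sum_distrib_left algebra_simps if_distrib[of "\<lambda>x. _ * x"]
        cong: if_cong)
  also have "\<dots> = p + (1 - p) * w$i - 1"
    by (simp only: sum_coords_wlast mult_1_right)
  also have "\<dots> = (w$i - 1) / ?K"
    by (simp add: p_def algebra_simps diff_divide_distrib del: of_nat_Suc)
  finally have "?K * bpoly (Suc n) (\<lambda>\<alpha>. \<Sum>j\<in>UNIV. (w - vertex i)$j * D1 \<beta> j \<alpha>) (vertex i) \<ge> w$i - 1"
    by (simp add: field_simps)
  then show ?thesis
    using bpoly_above_tangent[OF adm vertex_in_simplex w, of i] corner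
    by (simp add: bpoly_at_vertex)
qed

lemma maxcoord_ge: "1 / real (CARD('n) + 1) \<le> maxcoord (w::real^'n::finite)"
proof -
  have coord: "w$i \<le> maxcoord w" for i
    unfolding maxcoord_def by (rule max.coboundedI1, rule Max_ge) auto
  have "1 = (\<Sum>i\<in>UNIV. w$i) + wlast w" by (simp add: sum_coords_wlast)
  also have "\<dots> \<le> (\<Sum>i::'n\<in>UNIV. maxcoord w) + maxcoord w"
    by (intro add_mono sum_mono coord) (simp add: maxcoord_def)
  also have "\<dots> = real (CARD('n) + 1) * maxcoord w" by (simp add: algebra_simps)
  finally show ?thesis by (simp add: field_simps)
qed

lemma maxcoord_le: "(\<And>i. w$i \<le> a) \<Longrightarrow> wlast w \<le> a \<Longrightarrow> maxcoord w \<le> a"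
  unfolding maxcoord_def by (auto intro!: Max.boundedI)

lemma convex_on_cong_on:
  assumes "convex_on S f" and "\<And>x. x \<in> S \<Longrightarrow> g x = f x"
  shows "convex_on S g"
  using assms unfolding convex_on_def convex_def by auto

lemma Ak_subset_pickA:
  assumes k: "k \<ge> 2"
  shows "(Ak k :: (real^'n::finite \<Rightarrow> real) set) \<subseteq> pickA"
proof
  fix A :: "real^'n \<Rightarrow> real"
  assume "A \<in> Ak k"
  then obtain \<beta> where adm: "admissible k \<beta>" and A: "\<And>w. w \<in> unit_simplex \<Longrightarrow> A w = bpoly k \<beta> w"
    by (auto simp: Ak_iff)
  obtain n where kn: "k = Suc (Suc n)" using k by (metis add_2_eq_Suc le_Suc_ex)
  have "convex_on unit_simplex A"
    using convex_on_cong_on[OF bpoly_convex_on[OF adm[unfolded kn]]] A kn by blast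
  moreover have "1 / real (CARD('n) + 1) \<le> A w \<and> maxcoord w \<le> A w \<and> A w \<le> 1"
    if w: "w \<in> unit_simplex" for w
  proof -
    have "A w \<le> 1"
      using bpoly_mono[OF w, of k \<beta> "\<lambda>_. 1"] adm bpoly_one[of k w] A[OF w]
      by (simp add: admissible_def)
    moreover have "maxcoord w \<le> A w"
      using bpoly_ge_coord[OF adm[unfolded kn] w] bpoly_ge_wlast[OF adm[unfolded kn] w] A[OF w] kn
      by (simp add: maxcoord_le)
    ultimately show ?thesis using maxcoord_ge[of w] by simp
  qed
  ultimately show "A \<in> pickA" by (simp add: pickA_def)
qed

theorem mainTheorem6:
  fixes k :: nat
  assumes "k \<ge> 2"
  shows "(Ak k :: (real^'n::finite \<Rightarrow> real) set) \<subseteq> Ak (Suc k) \<and> (Ak k :: (real^'n \<Rightarrow> real) set) \<subseteq> pickA"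
  using Ak_nested[OF assms] Ak_subset_pickA[OF assms] by blast

end
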